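(* Let $\mathcal T$ be an $n$-leaf tree ($n\ge 3$) with leaves $N=\{1,\dots,n\}$ and internal edges $I_1,\dots,I_{n-3}$, and let $\mathbf M$ be its $n\times(2n-3)$ Shapley transformation matrix. Then the null space of $\mathbf M$ has dimension $n-3$. A basis of it is given by the vectors $w_{I_1},\dots,w_{I_{n-3}}\in\mathbb R^{2n-3}$, one for each internal edge, with coordinates $$(w_{I_k})_i=\begin{cases}-\dfrac{f(i,I_k)-1}{(n-2)\,c(i,I_k)} & \text{if } 1\le i\le n,\\[2mm] 1 & \text{if } i=n+k,\\ 0 & \text{otherwise,}\end{cases}$$ for $k\in\{1,\dots,n-3\}$. Here the first $n$ coordinates correspond to the leaf edges and coordinate $n+j$ corresponds to the internal edge $I_j$.
   Context: An $n$-leaf tree here is an unrooted tree whose leaves are labeled by $N=\{1,\dots,n\}$ and whose internal vertices all have degree 3. Such a tree has $2n-3$ edges: the $n$ leaf edges (leaf edge $i$ is incident to leaf $i$) and the $n-3$ internal edges $I_1,\dots,I_{n-3}$. Split counts: for a leaf $i$ and an edge $k$, removing $k$ splits the tree into two subtrees. $c(i,k)$ is the number of leaves in the subtree containing $i$, and $f(i,k)=n-c(i,k)$ is the number of leaves in the other subtree. The Shapley transformation matrix $\mathbf M$ is the $n\times(2n-3)$ matrix with entries $\mathbf M[i,k]=\dfrac{f(i,k)}{n\,c(i,k)}$. Its rows are indexed by leaves $i$ and its columns by edges $k$, in the order leaf edges $1,\dots,n$ then $I_1,\dots,I_{n-3}$. Equivalently, $\mathbf M$ is the matrix such that the Shapley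 value of the tree game equals $\mathbf M$ times the vector of edge weights. The tree game assigns to a set of leaves $S$ the total weight of the minimal subtree spanning $S$. *)

theory Defs
  imports "Jordan_Normal_Form.Matrix_Kernel"
begin

text \<open>Undirected graphs on natural-number vertices: edges are 2-element vertex sets.\<close>

definition adj :: "nat set set \<Rightarrow> (nat \<times> nat) set" where
  "adj E = {(u, v). {u, v} \<in> E}"

definition deg :: "nat set set \<Rightarrow> nat \<Rightarrow> nat" where
  "deg E v = card {e \<in> E. v \<in> e}"

definition is_tree :: "nat set \<Rightarrow> nat set set \<Rightarrow> bool" where
  "is_tree V E \<longleftrightarrow> finite V \<and> V \<noteq> {} \<and>
     E \<subseteq> {{u, v} | u v. u \<in> V \<and> v \<in> V \<and> u \<noteq> v} \<and>
     (\<forall>u\<in>V. \<forall>v\<in>V. (u, v) \<in> (adj E)\<^sup>*) \<and>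
     card E = card V - 1"

definition n_leaf_tree :: "nat \<Rightarrow> nat set \<Rightarrow> nat set set \<Rightarrow> bool" where
  "n_leaf_tree n V E \<longleftrightarrow> is_tree V E \<and> {1..n} \<subseteq> V \<and>
     (\<forall>i\<in>{1..n}. deg E i = 1) \<and> (\<forall>v\<in>V - {1..n}. deg E v = 3)"

text \<open>Edge labelling: edges numbered 1..2n-3; edge i (1 \<le> i \<le> n) is the leaf edge of
  leaf i, edge n+j is the internal edge I_j.\<close>

definition edge_labelling :: "nat \<Rightarrow> nat set set \<Rightarrow> (nat \<Rightarrow> nat set) \<Rightarrow> bool" where
  "edge_labelling n E ed \<longleftrightarrow> bij_betw ed {1..2*n-3} E \<and> (\<forall>i\<in>{1..n}. i \<in> ed i)"

definition comp :: "nat set set \<Rightarrow> nat set \<Rightarrow> nat \<Rightarrow> nat set" where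
  "comp E k i = {v. (i, v) \<in> (adj (E - {k}))\<^sup>*}"

definition cnt :: "nat \<Rightarrow> nat set set \<Rightarrow> nat \<Rightarrow> nat set \<Rightarrow> nat" where
  "cnt n E i k = card ({1..n} \<inter> comp E k i)"

definition fcnt :: "nat \<Rightarrow> nat set set \<Rightarrow> nat \<Rightarrow> nat set \<Rightarrow> nat" where
  "fcnt n E i k = n - cnt n E i k"

text \<open>Shapley transformation matrix (0-indexed: row r is leaf r+1, column s is edge s+1).\<close>

definition shapley_mat :: "nat \<Rightarrow> nat set set \<Rightarrow> (nat \<Rightarrow> nat set) \<Rightarrow> real mat" where
  "shapley_mat n E ed = mat n (2*n-3) (\<lambda>(r, s).
     real (fcnt n E (r+1) (ed (s+1))) / (real n * real (cnt n E (r+1) (ed (s+1)))))"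

text \<open>The vector w_{I_k} (0-indexed coordinates: coordinate s is edge s+1).\<close>

definition null_vec :: "nat \<Rightarrow> nat set set \<Rightarrow> (nat \<Rightarrow> nat set) \<Rightarrow> nat \<Rightarrow> real vec" where
  "null_vec n E ed k = vec (2*n-3) (\<lambda>s.
     if s < n then - (real (fcnt n E (s+1) (ed (n+k))) - 1)
                     / ((real n - 2) * real (cnt n E (s+1) (ed (n+k))))
     else if s + 1 = n + k then 1 else 0)"

end

theory Submission
  imports Defs
begin

text \<open>The leaf-edge columns of \<open>M\<close> form the block \<open>(a - b) I + b J\<close> with \<open>a = (n - 1)/n\<close> and
  \<open>b = 1/(n(n - 1))\<close>, since removing the leaf edge of \<open>i\<close> leaves \<open>i\<close> alone on its side. This block
  is invertible, so a kernel vector is determined by its internal-edge coordinates; hence the \<open>w\<^sub>I\<close>,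
  whose internal coordinates are unit vectors, form a basis of the kernel as soon as they lie in it.
  For an internal edge \<open>I\<close> both sides contain a leaf (by counting degrees in a cubic tree), so the
  leaves split into \<open>A\<close> and \<open>N - A\<close> with \<open>c(j, I) \<in> {|A|, n - |A|}\<close>. Then
  \<open>\<Sum>\<^sub>j (f(j, I) - 1)/c(j, I) = n - 2\<close>, i.e. the leaf coordinates of \<open>w\<^sub>I\<close> sum to \<open>-1\<close>, and each row
  of \<open>M w\<^sub>I\<close> vanishes by a rational identity in \<open>n\<close> and \<open>c(j, I)\<close>.\<close>

lemma adj_sym: "(x, y) \<in> adj F \<Longrightarrow> (y, x) \<in> adj F"
  unfolding adj_def by (auto simp: insert_commute)

lemma rtrancl_adj_sym: "(x, y) \<in> (adj F)\<^sup>* \<Longrightarrow> (y, x) \<in> (adj F)\<^sup>*"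
  by (induction rule: rtrancl_induct) (auto intro: converse_rtrancl_into_rtrancl adj_sym)

text \<open>Every vertex other than \<open>r\<close> is reached by a shortest path from \<open>r\<close>; sending it to the last
  edge of such a path is injective, because that edge leads from a vertex strictly closer to \<open>r\<close>.\<close>

lemma card_le_Suc_card_edges_if_reachable:
  assumes "finite F" "finite W" "r \<in> W" and reach: "\<And>w. w \<in> W \<Longrightarrow> (r, w) \<in> (adj F)\<^sup>*"
  shows "card W \<le> card F + 1"
proof -
  define d where "d x = (LEAST k. (r, x) \<in> adj F ^^ k)" for x
  have d_le: "d x \<le> k" if "(r, x) \<in> adj F ^^ k" for x k
    unfolding d_def using that by (rule Least_le)
  have "\<exists>p. d p < d w \<and> (p, w) \<in> adj F" if w: "w \<in> W - {r}" for w
  proof -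
    have "(r, w) \<in> adj F ^^ d w"
      unfolding d_def using reach[of w] w by (auto simp: rtrancl_power intro: LeastI_ex)
    moreover have "d w \<noteq> 0"
      using calculation w by (metis DiffD2 insertI1 relpow_0_E)
    ultimately obtain m where "d w = Suc m" "(r, w) \<in> adj F ^^ Suc m"
      by (metis not0_implies_Suc)
    then obtain p where "(r, p) \<in> adj F ^^ m" "(p, w) \<in> adj F" "d w = Suc m"
      by (blast elim: relpow_Suc_E)
    then show ?thesis using d_le by (metis le_imp_less_Suc)
  qed
  then obtain P where P: "\<And>w. w \<in> W - {r} \<Longrightarrow> d (P w) < d w \<and> (P w, w) \<in> adj F"
    by metis
  have "inj_on (\<lambda>w. {P w, w}) (W - {r})"
  proof (rule inj_onI)
    fix w w' assume w: "w \<in> W - {r}" and w': "w' \<in> W - {r}" and eq: "{P w, w} = {P w', w'}"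
    show "w = w'"
    proof (rule ccontr)
      assume "w \<noteq> w'"
      with eq have "P w = w'" "P w' = w" by (auto simp: doubleton_eq_iff)
      with P[OF w] P[OF w'] show False by simp
    qed
  qed
  moreover have "(\<lambda>w. {P w, w}) ` (W - {r}) \<subseteq> F"
    using P unfolding adj_def by auto
  ultimately have "card (W - {r}) \<le> card F"
    using \<open>finite F\<close> by (rule card_inj_on_le)
  then show ?thesis using assms(2,3) by simp
qed

lemma sum_card_incident_eq_sum_card_inter:
  assumes "finite S" "finite E"
  shows "(\<Sum>x\<in>S. card {f\<in>E. x \<in> f}) = (\<Sum>f\<in>E. card (f \<inter> S))"
proof -
  have "(\<Sum>x\<in>S. card {f\<in>E. x \<in> f}) = (\<Sum>x\<in>S. \<Sum>f\<in>E. if x \<in> f then 1 else 0)"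
    using assms by (simp add: sum.inter_filter[symmetric])
  also have "\<dots> = (\<Sum>f\<in>E. \<Sum>x\<in>S. if x \<in> f then 1 else 0)"
    by (rule sum.swap)
  also have "\<dots> = (\<Sum>f\<in>E. card (f \<inter> S))"
    using assms by (simp add: sum.inter_filter[symmetric] Int_def conj_commute)
  finally show ?thesis .
qed

locale tree_graph =
  fixes V :: "nat set" and E :: "nat set set"
  assumes tree: "is_tree V E"
begin

lemma finite_V: "finite V" and V_nonempty: "V \<noteq> {}"
  and connected: "\<And>x y. x \<in> V \<Longrightarrow> y \<in> V \<Longrightarrow> (x, y) \<in> (adj E)\<^sup>*"
  and card_E: "card E = card V - 1"
  using tree unfolding is_tree_def by blast+

lemma edgeE:
  assumes "f \<in> E"
  obtains y z where "f = {y, z}" "y \<noteq> z" "y \<in> V" "z \<in> V"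
  using tree assms unfolding is_tree_def by blast

lemma finite_E: "finite E"
proof (rule finite_subset)
  show "E \<subseteq> Pow V" by (auto elim: edgeE)
qed (simp add: finite_V)

lemma rtrancl_adj_closed:
  assumes "(x, y) \<in> (adj F)\<^sup>*" "F \<subseteq> E" "x \<in> V"
  shows "y \<in> V"
  using assms(1)
proof (induction rule: rtrancl_induct)
  case (step y z)
  then have "{y, z} \<in> E" using assms(2) unfolding adj_def by auto
  then show ?case by (elim edgeE) (auto simp: doubleton_eq_iff)
qed (use assms(3) in simp)

end

locale tree_edge = tree_graph +
  fixes u v :: nat
  assumes edge: "{u, v} \<in> E" and endpoints_distinct: "u \<noteq> v"
begin

abbreviation side :: "nat \<Rightarrow> nat set" where
  "side \<equiv> comp E {u, v}"

abbreviation E' :: "nat set set" where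
  "E' \<equiv> E - {{u, v}}"

lemma tree_edge_swap: "tree_edge V E v u"
  using edge endpoints_distinct by unfold_locales (auto simp: insert_commute)

lemma comp_swap: "comp E {v, u} = side"
  by (simp add: insert_commute)

lemma u_in_V: "u \<in> V" and v_in_V: "v \<in> V"
  using edge endpoints_distinct by (auto elim!: edgeE simp: doubleton_eq_iff)

lemma in_side_self: "x \<in> side x"
  unfolding comp_def by simp

lemma side_eq:
  assumes "y \<in> side x"
  shows "side y = side x"
proof -
  have "(x, y) \<in> (adj E')\<^sup>*" "(y, x) \<in> (adj E')\<^sup>*"
    using assms rtrancl_adj_sym unfolding comp_def by auto
  then show ?thesis unfolding comp_def by (auto intro: rtrancl_trans)
qed

lemma side_cover:
  assumes "x \<in> V"
  shows "x \<in> side u \<or> x \<in> side v"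
proof -
  have "(u, x) \<in> (adj E)\<^sup>*" using connected u_in_V assms by blast
  then show ?thesis
  proof (induction rule: rtrancl_induct)
    case (step y z)
    show ?case
    proof (cases "{y, z} = {u, v}")
      case True
      then show ?thesis using in_side_self by (auto simp: doubleton_eq_iff)
    next
      case False
      with step.hyps(2) have "(y, z) \<in> adj E'" unfolding adj_def by auto
      with step.IH show ?thesis unfolding comp_def by (auto intro: rtrancl_into_rtrancl)
    qed
  qed (use in_side_self in blast)
qed

text \<open>If \<open>v\<close> stayed reachable from \<open>u\<close>, the \<open>card V - 2\<close> remaining edges would connect all of \<open>V\<close>.\<close>

lemma v_notin_side_u: "v \<notin> side u"
proof
  assume "v \<in> side u"
  then have "x \<in> side u" if "x \<in> V" for x
    using side_cover[OF that] side_eq by blast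
  then have "card V \<le> card E' + 1"
    using finite_E finite_V u_in_V
    by (intro card_le_Suc_card_edges_if_reachable) (auto simp: comp_def)
  moreover have "card E' = card E - 1" "card E > 0" "card V > 0"
    using edge finite_E finite_V V_nonempty by (auto simp: card_gt_0_iff)
  ultimately show False using card_E by simp
qed

lemma sides_disjoint: "side u \<inter> side v = {}"
  using v_notin_side_u side_eq in_side_self by (metis disjoint_iff)

lemma side_cases:
  assumes "x \<in> V"
  shows "side x = side u \<or> side x = side v"
  using side_cover[OF assms] side_eq by metis

lemma side_subset_V: "x \<in> V \<Longrightarrow> side x \<subseteq> V"
  unfolding comp_def using rtrancl_adj_closed by blast

lemma V_eq_sides: "V = side u \<union> side v"
  using side_cover side_subset_V u_in_V v_in_V by blast

lemma finite_side: "x \<in> V \<Longrightarrow> finite (side x)"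
  using side_subset_V finite_V finite_subset by blast

lemma card_inter_sides:
  assumes "finite L"
  shows "card (L \<inter> side u) + card (L \<inter> side v) = card (L \<inter> V)"
proof -
  have "L \<inter> V = (L \<inter> side u) \<union> (L \<inter> side v)"
    using V_eq_sides by blast
  then show ?thesis
    using assms sides_disjoint by (simp add: card_Un_disjoint disjoint_iff)
qed

lemma card_leaves_side:
  assumes "L \<subseteq> V" "x \<in> V"
  shows "card (L \<inter> side x) = (if x \<in> side u then card (L \<inter> side u) else card L - card (L \<inter> side u))"
proof (cases "x \<in> side u")
  case True
  then show ?thesis using side_eq by simp
next
  case False
  then have "side x = side v" using side_cases[OF assms(2)] in_side_self by metis
  moreover have "finite L" using assms(1) finite_V finite_subset by blast
  ultimately show ?thesis
    using False card_inter_sides[of L] assms(1) by (simp add: Int_absorb2)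
qed

lemma edge_within_side:
  assumes "f \<in> E'"
  shows "f \<subseteq> side u \<or> f \<subseteq> side v"
proof -
  from assms have "f \<in> E" by simp
  then obtain y z where f: "f = {y, z}" "y \<in> V" by (rule edgeE)
  then have "(y, z) \<in> adj E'" using assms unfolding adj_def by auto
  then have "z \<in> side y" unfolding comp_def by auto
  then have "f \<subseteq> side y"
    using f(1) side_eq in_side_self by blast
  then show ?thesis
    using side_cases[OF f(2)] by auto
qed

abbreviation side_edges :: "nat \<Rightarrow> nat set set" where
  "side_edges x \<equiv> {f \<in> E'. f \<subseteq> side x}"

lemma card_side_le:
  assumes "x \<in> V"
  shows "card (side x) \<le> card (side_edges x) + 1"
proof (rule card_le_Suc_card_edges_if_reachable)
  show "finite (side_edges x)" using finite_E by simp
  show "finite (side x)" using finite_side[OF assms] .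
  show "x \<in> side x" by (rule in_side_self)
  fix w assume "w \<in> side x"
  then have "(x, w) \<in> (adj E')\<^sup>*" unfolding comp_def by simp
  then show "(x, w) \<in> (adj (side_edges x))\<^sup>*"
  proof (induction rule: rtrancl_induct)
    case (step y z)
    then have "y \<in> side x" "z \<in> side x" unfolding comp_def by auto
    with step.hyps(2) have "(y, z) \<in> adj (side_edges x)" unfolding adj_def by auto
    with step.IH show ?case by (rule rtrancl_into_rtrancl)
  qed simp
qed

text \<open>Both sides are trees: the two bounds of \<open>card_side_le\<close> add up to an equality.\<close>

lemma card_side_u: "card (side u) = card (side_edges u) + 1"
proof -
  have "side_edges u \<inter> side_edges v = {}"
  proof -
    have "f \<notin> side_edges v" if "f \<in> side_edges u" for f
    proof -
      from that obtain y z where "f = {y, z}" by (blast elim: edgeE)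
      with that sides_disjoint show ?thesis by auto
    qed
    then show ?thesis by (simp add: disjoint_iff)
  qed
  moreover have "E' = side_edges u \<union> side_edges v"
    using edge_within_side by blast
  then have "card E' = card (side_edges u \<union> side_edges v)"
    by (rule arg_cong)
  ultimately have "card E' = card (side_edges u) + card (side_edges v)"
    using finite_E by (simp add: card_Un_disjoint)
  moreover have "card V = card (side u) + card (side v)"
    unfolding V_eq_sides using sides_disjoint finite_side u_in_V v_in_V by (intro card_Un_disjoint)
  moreover have "card E' = card E - 1" "card (side u) > 0" "card (side v) > 0"
    using edge finite_E finite_side u_in_V v_in_V in_side_self by (auto simp: card_gt_0_iff)
  ultimately show ?thesis
    using card_side_le[OF u_in_V] card_side_le[OF v_in_V] card_E by linarith
qed

lemma sum_deg_side_u: "(\<Sum>x\<in>side u. deg E x) = 2 * card (side_edges u) + 1"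
proof -
  have "(\<Sum>x\<in>side u. deg E x) = (\<Sum>f\<in>E. card (f \<inter> side u))"
    unfolding deg_def using finite_side[OF u_in_V] finite_E
    by (rule sum_card_incident_eq_sum_card_inter)
  also have "\<dots> = card ({u, v} \<inter> side u) + (\<Sum>f\<in>E'. card (f \<inter> side u))"
    using edge finite_E by (simp add: sum.remove)
  also have "{u, v} \<inter> side u = {u}"
    using in_side_self v_notin_side_u by auto
  also have "(\<Sum>f\<in>E'. card (f \<inter> side u)) = (\<Sum>f\<in>E'. if f \<subseteq> side u then 2 else 0)"
  proof (rule sum.cong)
    fix f assume f: "f \<in> E'"
    show "card (f \<inter> side u) = (if f \<subseteq> side u then 2 else 0)"
    proof (cases "f \<subseteq> side u")
      case True
      then show ?thesis using f by (auto elim!: edgeE simp: Int_absorb2)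
    next
      case False
      then have "f \<subseteq> side v" using f edge_within_side by blast
      then have "f \<inter> side u = {}" using sides_disjoint by blast
      then show ?thesis using False by simp
    qed
  qed simp
  also have "\<dots> = (\<Sum>f\<in>side_edges u. 2)"
    by (rule sum.inter_filter[symmetric]) (simp add: finite_E)
  finally show ?thesis by simp
qed

text \<open>A side without leaves would consist of degree-3 vertices, with degree sum
  \<open>3 * card (side u)\<close> instead of \<open>2 * card (side u) - 1\<close>.\<close>

lemma side_u_has_leaf:
  assumes "\<And>x. x \<in> V - L \<Longrightarrow> deg E x = 3"
  shows "L \<inter> side u \<noteq> {}"
proof
  assume "L \<inter> side u = {}"
  then have "(\<Sum>x\<in>side u. deg E x) = (\<Sum>x\<in>side u. 3)"
    using assms side_subset_V[OF u_in_V] by (intro sum.cong) auto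
  then have "3 * card (side u) = 2 * card (side_edges u) + 1"
    using sum_deg_side_u by simp
  with card_side_u show False by simp
qed

lemma side_u_of_leaf:
  assumes "deg E u = 1"
  shows "side u = {u}"
proof -
  obtain f0 where "{f \<in> E. u \<in> f} = {f0}"
    using assms unfolding deg_def by (rule card_1_singletonE)
  moreover have "{u, v} \<in> {f \<in> E. u \<in> f}"
    using edge by simp
  ultimately have incident: "{f \<in> E. u \<in> f} = {{u, v}}"
    by simp
  have stuck: "x = u" if "(u, x) \<in> (adj E')\<^sup>*" for x
    using that
  proof (induction rule: rtrancl_induct)
    case (step y z)
    then have "{u, z} \<in> E" "{u, z} \<noteq> {u, v}" unfolding adj_def by auto
    then have "{u, z} \<in> {f \<in> E. u \<in> f}" by simp
    with incident \<open>{u, z} \<noteq> {u, v}\<close> show ?case by simp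
  qed simp
  show ?thesis
  proof
    show "side u \<subseteq> {u}" using stuck unfolding comp_def by blast
  qed (simp add: in_side_self)
qed

end

lemma index_mult_mat_vec_split:
  assumes "M \<in> carrier_mat nr (n + m)" "x \<in> carrier_vec (n + m)" "r < nr"
  shows "(M *\<^sub>v x) $ r = (\<Sum>s<n. M $$ (r, s) * x $ s) + (\<Sum>s\<in>{n..<n + m}. M $$ (r, s) * x $ s)"
proof -
  have "(M *\<^sub>v x) $ r = (\<Sum>s\<in>{0..<n + m}. M $$ (r, s) * x $ s)"
    using assms by (simp add: scalar_prod_def)
  also have "\<dots> = (\<Sum>s\<in>{0..<n}. M $$ (r, s) * x $ s) + (\<Sum>s\<in>{n..<n + m}. M $$ (r, s) * x $ s)"
    by (simp add: sum.atLeastLessThan_concat)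
  finally show ?thesis by (simp add: atLeast0LessThan)
qed

lemma sum_diag_const:
  fixes y :: "nat \<Rightarrow> 'a :: comm_ring_1"
  assumes "r < n"
  shows "(\<Sum>s<n. (if r = s then a else b) * y s) = b * (\<Sum>s<n. y s) + (a - b) * y r"
proof -
  have "(\<Sum>s<n. (if r = s then a else b) * y s) = (\<Sum>s<n. b * y s + (if r = s then (a - b) * y s else 0))"
    by (rule sum.cong) (auto simp: algebra_simps)
  also have "\<dots> = b * (\<Sum>s<n. y s) + (a - b) * y r"
    using assms by (simp add: sum.distrib sum_distrib_left)
  finally show ?thesis .
qed

text \<open>The block \<open>(a - b) I + b J\<close> is invertible: summing the equations isolates \<open>\<Sum>y\<close>.\<close>

lemma diag_const_block_kernel_trivial:
  fixes M :: "'a :: field mat"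
  assumes M: "M \<in> carrier_mat n (n + m)"
    and block: "\<And>r s. r < n \<Longrightarrow> s < n \<Longrightarrow> M $$ (r, s) = (if r = s then a else b)"
    and "a \<noteq> b" and "of_nat n * b + (a - b) \<noteq> 0"
    and y: "y \<in> carrier_vec (n + m)" and tail: "\<And>s. n \<le> s \<Longrightarrow> s < n + m \<Longrightarrow> y $ s = 0"
    and "M *\<^sub>v y = 0\<^sub>v n"
  shows "y = 0\<^sub>v (n + m)"
proof -
  have row: "b * (\<Sum>s<n. y $ s) + (a - b) * y $ r = 0" if r: "r < n" for r
  proof -
    have "0 = (M *\<^sub>v y) $ r" using \<open>M *\<^sub>v y = 0\<^sub>v n\<close> r by simp
    also have "\<dots> = (\<Sum>s<n. (if r = s then a else b) * y $ s)"
      using index_mult_mat_vec_split[OF M y r] tail block r by simp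
    finally show ?thesis using sum_diag_const[OF r, of a b "\<lambda>s. y $ s"] by simp
  qed
  define S where "S = (\<Sum>s<n. y $ s)"
  have "0 = (\<Sum>r<n. b * S + (a - b) * y $ r)"
    using row by (simp add: S_def)
  also have "\<dots> = (of_nat n * b + (a - b)) * S"
    by (simp add: S_def sum.distrib distrib_right mult.assoc flip: sum_distrib_left)
  finally have "S = 0" using assms(4) by simp
  then have "y $ r = 0" if "r < n" for r
    using row[OF that] \<open>a \<noteq> b\<close> by (simp add: S_def[symmetric])
  with tail y show ?thesis
    by (intro eq_vecI) (auto, metis not_less)
qed

locale kernel_free_coordinates =
  fixes nr n m :: nat and M :: "'a :: field mat" and W :: "nat \<Rightarrow> 'a vec"
  assumes M: "M \<in> carrier_mat nr (n + m)"
    and pivots: "\<And>y. y \<in> carrier_vec (n + m) \<Longrightarrow> (\<And>s. n \<le> s \<Longrightarrow> s < n + m \<Longrightarrow> y $ s = 0) \<Longrightarrow>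
      M *\<^sub>v y = 0\<^sub>v nr \<Longrightarrow> y = 0\<^sub>v (n + m)"
    and W_carrier: "\<And>k. k \<in> {1..m} \<Longrightarrow> W k \<in> carrier_vec (n + m)"
    and W_free: "\<And>k s. k \<in> {1..m} \<Longrightarrow> n \<le> s \<Longrightarrow> s < n + m \<Longrightarrow> W k $ s = (if s + 1 = n + k then 1 else 0)"
    and W_kernel: "\<And>k. k \<in> {1..m} \<Longrightarrow> M *\<^sub>v W k = 0\<^sub>v nr"
begin

sublocale K: kernel nr "n + m" M
  by unfold_locales (rule M)

lemma W_pivot: "k \<in> {1..m} \<Longrightarrow> l \<in> {1..m} \<Longrightarrow> W l $ (n + k - 1) = (if l = k then 1 else 0)"
  using W_free[of l "n + k - 1"] by auto

lemma inj_on_W: "inj_on W {1..m}"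
proof (rule inj_onI)
  fix k l assume "k \<in> {1..m}" "l \<in> {1..m}" "W k = W l"
  then show "k = l" using W_pivot[of k k] W_pivot[of k l] by (auto split: if_splits)
qed

lemma W_image_subset_kernel: "W ` {1..m} \<subseteq> mat_kernel M"
  using W_carrier W_kernel mat_kernelI[OF M] by blast

lemma lincomb_pivot:
  assumes "U \<subseteq> W ` {1..m}" "finite U" "k \<in> {1..m}"
  shows "K.lincomb a U $ (n + k - 1) = (if W k \<in> U then a (W k) else 0)"
proof -
  have "K.lincomb a U $ (n + k - 1) = (\<Sum>x\<in>U. a x * x $ (n + k - 1))"
    using assms W_image_subset_kernel by (intro K.lincomb_index) auto
  also have "\<dots> = (\<Sum>x\<in>U. if x = W k then a x else 0)"
  proof (rule sum.cong)
    fix x assume "x \<in> U"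
    then obtain l where "l \<in> {1..m}" "x = W l" using assms(1) by auto
    then show "a x * x $ (n + k - 1) = (if x = W k then a x else 0)"
      using W_pivot[OF assms(3)] inj_on_W assms(3) by (auto dest: inj_onD)
  qed simp
  finally show ?thesis using assms(2) by simp
qed

lemma lin_indpt_W: "K.lin_indpt (W ` {1..m})"
proof
  assume "K.lin_dep (W ` {1..m})"
  then obtain U a w where U: "finite U" "U \<subseteq> W ` {1..m}" and "K.lincomb a U = 0\<^sub>v (n + m)"
    and w: "w \<in> U" "a w \<noteq> 0"
    unfolding K.Ker.lin_dep_def by auto
  moreover obtain k where k: "k \<in> {1..m}" "w = W k" using w U by auto
  ultimately have "a w = 0"
    using lincomb_pivot[OF U(2,1) k(1), of a] by auto
  with w show False by simp
qed

text \<open>A kernel vector \<open>x\<close> agrees with \<open>\<Sum>\<^sub>k x\<^sub>n\<^sub>+\<^sub>k\<^sub>-\<^sub>1 W k\<close> on the free coordinates, so by \<open>pivots\<close>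
  the two coincide.\<close>

lemma kernel_subset_span_W: "mat_kernel M \<subseteq> K.span (W ` {1..m})"
proof
  fix x assume x: "x \<in> mat_kernel M"
  define a where "a w = x $ (n + the_inv_into {1..m} W w - 1)" for w
  define l where "l = K.lincomb a (W ` {1..m})"
  have l_kernel: "l \<in> mat_kernel M"
    unfolding l_def using W_image_subset_kernel by (intro K.Ker.lincomb_closed) auto
  have carriers: "x \<in> carrier_vec (n + m)" "l \<in> carrier_vec (n + m)"
    using x l_kernel mat_kernelD[OF M] by auto
  have "x - l = 0\<^sub>v (n + m)"
  proof (rule pivots)
    show "x - l \<in> carrier_vec (n + m)" using carriers by simp
    show "M *\<^sub>v (x - l) = 0\<^sub>v nr"
      using x l_kernel mat_kernelD[OF M] by (simp add: mult_minus_distrib_mat_vec[OF M])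
    fix s assume s: "n \<le> s" "s < n + m"
    then have k: "s + 1 - n \<in> {1..m}" and "s = n + (s + 1 - n) - 1" by auto
    then have "l $ s = x $ s"
      unfolding l_def using lincomb_pivot[OF _ _ k, of "W ` {1..m}" a] inj_on_W
      by (simp add: a_def the_inv_into_f_f)
    then show "(x - l) $ s = 0" using s carriers by simp
  qed
  then have "x = l"
  proof (intro eq_vecI)
    fix i assume "x - l = 0\<^sub>v (n + m)" "i < dim_vec l"
    then have "(x - l) $ i = 0" using carriers by simp
    then show "x $ i = l $ i" using \<open>i < dim_vec l\<close> carriers by simp
  qed (use carriers in auto)
  then show "x \<in> K.span (W ` {1..m})"
    unfolding K.Ker.span_def l_def by blast
qed

lemma basis_W: "K.basis (W ` {1..m})"
proof -
  have "K.span (W ` {1..m}) = mat_kernel M"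
    using K.Ker.span_is_subset2[OF W_image_subset_kernel] kernel_subset_span_W by blast
  then show ?thesis
    using K.Ker.basis_def lin_indpt_W W_image_subset_kernel by blast
qed

lemma kernel_dim_eq: "kernel_dim M = m"
proof -
  have "K.dim = card (W ` {1..m})"
    by (rule K.Ker.dim_basis[OF _ basis_W]) simp
  then show ?thesis using inj_on_W by (simp add: card_image)
qed

end

lemma n_leaf_tree_edgeE:
  assumes "n_leaf_tree n V E" "e \<in> E"
  obtains u v where "e = {u, v}" "u \<noteq> v" "tree_edge V E u v"
proof -
  have "tree_graph V E" using assms(1) unfolding n_leaf_tree_def by unfold_locales simp
  then obtain u v where "e = {u, v}" "u \<noteq> v" using assms(2) by (blast elim: tree_graph.edgeE)
  moreover from calculation assms have "tree_edge V E u v"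
    unfolding n_leaf_tree_def by unfold_locales auto
  ultimately show thesis by (rule that)
qed

lemma cnt_edge:
  assumes leaf_tree: "n_leaf_tree n V E" and "tree_edge V E u v" and j: "j \<in> {1..n}"
  shows "cnt n E j {u, v} = (if j \<in> comp E {u, v} u then card ({1..n} \<inter> comp E {u, v} u)
    else n - card ({1..n} \<inter> comp E {u, v} u))"
proof -
  interpret tree_edge V E u v by fact
  have "{1..n} \<subseteq> V" using leaf_tree unfolding n_leaf_tree_def by blast
  then show ?thesis using card_leaves_side[of "{1..n}" j] j unfolding cnt_def by auto
qed

lemma cnt_bipartition:
  assumes leaf_tree: "n_leaf_tree n V E" and e: "e \<in> E"
  obtains A where "A \<subseteq> {1..n}" "A \<noteq> {}" "A \<noteq> {1..n}"
    "\<And>j. j \<in> {1..n} \<Longrightarrow> cnt n E j e = (if j \<in> A then card A else n - card A)"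
proof -
  obtain u v where uv: "e = {u, v}" and "tree_edge V E u v"
    using n_leaf_tree_edgeE[OF assms] by metis
  interpret tree_edge V E u v by fact
  interpret swapped: tree_edge V E v u by (rule tree_edge_swap)
  have deg3: "\<And>x. x \<in> V - {1..n} \<Longrightarrow> deg E x = 3"
    using leaf_tree unfolding n_leaf_tree_def by blast
  define A where "A = {1..n} \<inter> side u"
  have "A \<subseteq> {1..n}" unfolding A_def by blast
  moreover have "A \<noteq> {}" unfolding A_def using side_u_has_leaf deg3 by blast
  moreover have "{1..n} \<inter> swapped.side v \<noteq> {}"
    using deg3 by (rule swapped.side_u_has_leaf)
  then have "A \<noteq> {1..n}" unfolding A_def using comp_swap sides_disjoint by auto
  moreover have "cnt n E j e = (if j \<in> A then card A else n - card A)" if "j \<in> {1..n}" for j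
    using cnt_edge[OF leaf_tree \<open>tree_edge V E u v\<close> that] that uv unfolding A_def by simp
  ultimately show thesis by (rule that)
qed

lemma cnt_leaf_edge:
  assumes leaf_tree: "n_leaf_tree n V E" and "e \<in> E" "i \<in> {1..n}" "i \<in> e" "j \<in> {1..n}"
  shows "cnt n E j e = (if j = i then 1 else n - 1)"
proof -
  obtain u v where uv: "e = {u, v}" "tree_edge V E u v"
    using n_leaf_tree_edgeE[OF leaf_tree \<open>e \<in> E\<close>] by metis
  have "\<exists>w. e = {i, w} \<and> tree_edge V E i w"
  proof (cases "i = u")
    case False
    then have "i = v" using uv \<open>i \<in> e\<close> by blast
    then show ?thesis using uv tree_edge.tree_edge_swap by (metis insert_commute)
  qed (use uv in blast)
  then obtain w where "e = {i, w}" "tree_edge V E i w" by blast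
  moreover have "tree_edge.side E i w i = {i}"
    using leaf_tree \<open>i \<in> {1..n}\<close> calculation(2) tree_edge.side_u_of_leaf unfolding n_leaf_tree_def by blast
  ultimately show ?thesis
    using cnt_edge[OF leaf_tree _ \<open>j \<in> {1..n}\<close>] \<open>i \<in> {1..n}\<close> by auto
qed

lemma edge_labelling_in_E:
  assumes "edge_labelling n E ed" "j \<in> {1..2 * n - 3}"
  shows "ed j \<in> E"
  using assms unfolding edge_labelling_def by (auto intro: bij_betw_apply)

lemma shapley_mat_leaf_block:
  assumes "n \<ge> 3" "n_leaf_tree n V E" "edge_labelling n E ed" "r < n" "s < n"
  shows "shapley_mat n E ed $$ (r, s) = (if r = s then (real n - 1) / real n else 1 / (real n * (real n - 1)))"
proof -
  have "ed (s + 1) \<in> E" "s + 1 \<in> ed (s + 1)"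
    using assms(1,3,5) edge_labelling_in_E unfolding edge_labelling_def by auto
  then have "cnt n E (r + 1) (ed (s + 1)) = (if r = s then 1 else n - 1)"
    using cnt_leaf_edge[OF assms(2), of "ed (s + 1)" "s + 1" "r + 1"] assms(4,5) by simp
  then show ?thesis
    using assms unfolding shapley_mat_def fcnt_def by (auto simp: of_nat_diff)
qed

lemma card_proper_subset_atLeastAtMost:
  assumes "A \<subseteq> {1..n}" "A \<noteq> {}" "A \<noteq> {1..n}"
  shows "1 \<le> card A" "card A < n"
proof -
  have "finite A" using assms(1) finite_subset by blast
  then show "1 \<le> card A" using assms(2) by (simp add: Suc_le_eq card_gt_0_iff)
  show "card A < n" using assms(1,3) psubset_card_mono[of "{1..n}" A] by auto
qed

lemma sum_bipartition_ratio:
  assumes A: "A \<subseteq> {1..n}" "A \<noteq> {}" "A \<noteq> {1..n}"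
    and c: "\<And>j. j \<in> {1..n} \<Longrightarrow> c j = (if j \<in> A then card A else n - card A)"
  shows "(\<Sum>j\<in>{1..n}. (real (n - c j) - 1) / real (c j)) = real n - 2"
proof -
  have "finite A" using A(1) finite_subset by blast
  note a = card_proper_subset_atLeastAtMost[OF A]
  have "(\<Sum>j\<in>{1..n}. (real (n - c j) - 1) / real (c j))
      = (\<Sum>j\<in>{1..n} - A. (real (n - c j) - 1) / real (c j)) + (\<Sum>j\<in>A. (real (n - c j) - 1) / real (c j))"
    by (rule sum.subset_diff[OF A(1)]) simp
  also have "(\<Sum>j\<in>A. (real (n - c j) - 1) / real (c j)) = (\<Sum>j\<in>A. (real (n - card A) - 1) / real (card A))"
    using A c by (intro sum.cong) auto
  also have "\<dots> = real n - real (card A) - 1"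
    using a by (simp add: of_nat_diff)
  also have "(\<Sum>j\<in>{1..n} - A. (real (n - c j) - 1) / real (c j)) = (\<Sum>j\<in>{1..n} - A. (real (card A) - 1) / real (n - card A))"
    using A c a by (intro sum.cong) auto
  also have "\<dots> = real (card A) - 1"
    using a A(1) \<open>finite A\<close> by (simp add: card_Diff_subset of_nat_diff)
  finally show ?thesis by simp
qed

lemma shapley_diag_minus_offdiag:
  fixes n :: real
  assumes "n \<noteq> 0" "n \<noteq> 1"
  shows "(n - 1) / n - 1 / (n * (n - 1)) = (n - 2) / (n - 1)"
  using assms by (simp add: field_simps) algebra

lemma shapley_leaf_block_nondegenerate:
  assumes "n \<ge> 3"
  shows "(real n - 1) / real n \<noteq> 1 / (real n * (real n - 1))"
    and "real n * (1 / (real n * (real n - 1))) + ((real n - 1) / real n - 1 / (real n * (real n - 1))) \<noteq> 0"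
proof -
  have gap: "(real n - 1) / real n - 1 / (real n * (real n - 1)) = (real n - 2) / (real n - 1)"
    using assms by (intro shapley_diag_minus_offdiag) auto
  then show "(real n - 1) / real n \<noteq> 1 / (real n * (real n - 1))"
    using assms by auto
  show "real n * (1 / (real n * (real n - 1))) + ((real n - 1) / real n - 1 / (real n * (real n - 1))) \<noteq> 0"
    unfolding gap using assms by (simp add: field_simps)
qed

text \<open>Row \<open>r\<close> of \<open>M w\<^sub>I\<close>: \<open>b \<Sum>w + (a - b) w\<^sub>r + M[r, I]\<close>, with \<open>\<Sum>w = -1\<close> and \<open>c = c(r, I)\<close>.\<close>

lemma shapley_row_identity:
  fixes n c :: real
  assumes "n \<noteq> 0" "n \<noteq> 1" "n \<noteq> 2" "c \<noteq> 0"
  shows "1 / (n * (n - 1)) * (- 1) + ((n - 1) / n - 1 / (n * (n - 1))) * (- (n - c - 1) / ((n - 2) * c))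
    + (n - c) / (n * c) = 0"
proof -
  have "(n - 1) / n - 1 / (n * (n - 1)) = (n - 2) / (n - 1)"
    using assms(1,2) by (rule shapley_diag_minus_offdiag)
  moreover have "x / y * (- z / (x * c)) = - z / (y * c)" if "x \<noteq> 0" for x y z
    using that assms(4) by (simp add: field_simps)
  moreover have "1 / (n * m) * (- 1) + - (n - c - 1) / (m * c) + (n - c) / (n * c) = 0"
    if "m = n - 1" for m
  proof -
    have "m \<noteq> 0" using that assms(2) by simp
    then have "1 / (n * m) * (- 1) + - (n - c - 1) / (m * c) + (n - c) / (n * c)
        = (- c - n * (n - c - 1) + m * (n - c)) / (n * m * c)"
      using assms(1,4) by (simp add: field_simps)
    also have "- c - n * (n - c - 1) + m * (n - c) = 0"
      unfolding that by (simp add: algebra_simps)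
    finally show ?thesis by simp
  qed
  ultimately show ?thesis using assms(3) by simp
qed

lemma cnt_bounds:
  assumes "j \<in> {1..n}"
  shows "1 \<le> cnt n E j e" "cnt n E j e \<le> n"
proof -
  have "j \<in> {1..n} \<inter> comp E e j" using assms by (simp add: comp_def)
  then show "1 \<le> cnt n E j e" unfolding cnt_def by (auto simp: Suc_le_eq card_gt_0_iff)
  show "cnt n E j e \<le> n" unfolding cnt_def using card_mono[of "{1..n}"] by fastforce
qed

lemma null_vec_leaf:
  "s < n \<Longrightarrow> n \<ge> 3 \<Longrightarrow> null_vec n E ed k $ s
    = - ((real (n - cnt n E (s + 1) (ed (n + k))) - 1) / real (cnt n E (s + 1) (ed (n + k)))) / (real n - 2)"
  by (simp add: null_vec_def fcnt_def divide_divide_eq_left mult.commute[of "real n - 2"] minus_divide_left)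

lemma null_vec_free:
  "n \<le> s \<Longrightarrow> s < 2 * n - 3 \<Longrightarrow> null_vec n E ed k $ s = (if s + 1 = n + k then 1 else 0)"
  by (simp add: null_vec_def)

lemma sum_null_vec_leaf:
  assumes n3: "n \<ge> 3" and leaf_tree: "n_leaf_tree n V E" and lab: "edge_labelling n E ed"
    and k: "k \<in> {1..n - 3}"
  shows "(\<Sum>s<n. null_vec n E ed k $ s) = - 1"
proof -
  define c where "c j = cnt n E j (ed (n + k))" for j
  have "ed (n + k) \<in> E" using lab k by (intro edge_labelling_in_E) auto
  then obtain A where A: "A \<subseteq> {1..n}" "A \<noteq> {}" "A \<noteq> {1..n}"
    and c: "\<And>j. j \<in> {1..n} \<Longrightarrow> c j = (if j \<in> A then card A else n - card A)"
    unfolding c_def using cnt_bipartition[OF leaf_tree] by metis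
  have "(\<Sum>s<n. null_vec n E ed k $ s)
      = (\<Sum>s<n. - ((real (n - c (s + 1)) - 1) / real (c (s + 1))) / (real n - 2))"
    using n3 by (intro sum.cong) (simp_all add: null_vec_leaf c_def)
  also have "\<dots> = - (\<Sum>s<n. (real (n - c (s + 1)) - 1) / real (c (s + 1))) / (real n - 2)"
    by (simp only: sum_divide_distrib[symmetric] sum_negf)
  also have "(\<Sum>s<n. (real (n - c (s + 1)) - 1) / real (c (s + 1)))
      = (\<Sum>j\<in>{1..n}. (real (n - c j) - 1) / real (c j))"
    by (simp add: sum.atLeast1_atMost_eq)
  also have "\<dots> = real n - 2"
    using A c by (rule sum_bipartition_ratio)
  finally show ?thesis using n3 by (simp add: divide_eq_eq)
qed

lemma shapley_mat_mult_null_vec: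
  assumes n3: "n \<ge> 3" and leaf_tree: "n_leaf_tree n V E" and lab: "edge_labelling n E ed"
    and k: "k \<in> {1..n - 3}"
  shows "shapley_mat n E ed *\<^sub>v null_vec n E ed k = 0\<^sub>v n"
proof (rule eq_vecI)
  let ?M = "shapley_mat n E ed" and ?w = "null_vec n E ed k"
  have cols: "2 * n - 3 = n + (n - 3)" using n3 by simp
  fix r assume "r < dim_vec (0\<^sub>v n :: real vec)"
  then have r: "r < n" by simp
  let ?c = "cnt n E (r + 1) (ed (n + k))"
  have "(\<Sum>s\<in>{n..<n + (n - 3)}. ?M $$ (r, s) * ?w $ s)
      = (\<Sum>s\<in>{n..<n + (n - 3)}. if s = n + k - 1 then ?M $$ (r, s) else 0)"
    using k by (intro sum.cong) (auto simp: null_vec_free cols)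
  also have "\<dots> = ?M $$ (r, n + k - 1)"
    using k by (auto simp: sum.delta)
  finally have "(?M *\<^sub>v ?w) $ r = (\<Sum>s<n. ?M $$ (r, s) * ?w $ s) + ?M $$ (r, n + k - 1)"
    using index_mult_mat_vec_split[of ?M n n "n - 3" ?w r] r
    by (simp add: shapley_mat_def null_vec_def cols)
  also have "(\<Sum>s<n. ?M $$ (r, s) * ?w $ s)
      = 1 / (real n * (real n - 1)) * (- 1) + ((real n - 1) / real n - 1 / (real n * (real n - 1))) * ?w $ r"
    using sum_diag_const[OF r, of "(real n - 1) / real n" "1 / (real n * (real n - 1))" "\<lambda>s. ?w $ s"]
      shapley_mat_leaf_block[OF n3 leaf_tree lab r] sum_null_vec_leaf[OF assms] by simp
  also have "?M $$ (r, n + k - 1) = real (n - ?c) / (real n * real ?c)"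
  proof -
    have "n + k - 1 < 2 * n - 3" "Suc (n + k - 1) = n + k" using k n3 by auto
    then show ?thesis using r by (simp add: shapley_mat_def fcnt_def)
  qed
  finally show "(?M *\<^sub>v ?w) $ r = 0\<^sub>v n $ r"
    using shapley_row_identity[of n ?c] cnt_bounds[of "r + 1" n E "ed (n + k)"] r n3
    by (simp add: null_vec_def fcnt_def of_nat_diff)
next
  show "dim_vec (shapley_mat n E ed *\<^sub>v null_vec n E ed k) = dim_vec (0\<^sub>v n :: real vec)"
    by (simp add: shapley_mat_def)
qed

theorem theorem6:
  fixes n :: nat and V :: "nat set" and E :: "nat set set" and ed :: "nat \<Rightarrow> nat set"
  assumes "n \<ge> 3"
    and "n_leaf_tree n V E"
    and "edge_labelling n E ed"
  shows "kernel_dim (shapley_mat n E ed) = n - 3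
    \<and> inj_on (null_vec n E ed) {1..n-3}
    \<and> kernel.basis (2*n-3) (shapley_mat n E ed) (null_vec n E ed ` {1..n-3})"
proof -
  have cols: "2 * n - 3 = n + (n - 3)" using assms(1) by simp
  have M: "shapley_mat n E ed \<in> carrier_mat n (n + (n - 3))"
    by (simp add: shapley_mat_def cols)
  interpret kernel_free_coordinates n n "n - 3" "shapley_mat n E ed" "null_vec n E ed"
  proof
    show "y = 0\<^sub>v (n + (n - 3))"
      if "y \<in> carrier_vec (n + (n - 3))" "\<And>s. n \<le> s \<Longrightarrow> s < n + (n - 3) \<Longrightarrow> y $ s = 0"
        "shapley_mat n E ed *\<^sub>v y = 0\<^sub>v n" for y
      using diag_const_block_kernel_trivial[OF M shapley_mat_leaf_block[OF assms]
        shapley_leaf_block_nondegenerate[OF assms(1)]] that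
      by blast
    show "shapley_mat n E ed *\<^sub>v null_vec n E ed k = 0\<^sub>v n" if "k \<in> {1..n - 3}" for k
      using assms that by (rule shapley_mat_mult_null_vec)
  qed (auto simp: M null_vec_free cols null_vec_def)
  show ?thesis
    unfolding cols using kernel_dim_eq inj_on_W basis_W by blast
qed

end
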